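(* Let $X,M\ge 1$, $\delta>0$, let $\mathcal{M}$ be a set of at most $T$ integer points $(l,m)$ with $M\le m<2M$, let $\lambda_{lm}$ be real numbers for $(l,m)\in\mathcal{M}$, and let $\{a_n\}$ be a sequence of complex numbers. Then $$\sum_{(l,m)\in\mathcal{M}}\max_{N\le X}\Big|\sum_{mn\le N}a_n e(\lambda_{lm}n)\Big|^2\ll D_\delta\log^3(2TX)\left(\frac{X}{M}+\delta^{-1}\right)\sum_{n\le X/M}|a_n|^2,$$ where $$D_\delta=\max_{(l,m)\in\mathcal{M}}\#\{(l',m')\in\mathcal{M}:\|\lambda_{lm}-\lambda_{l'm'}\|<\delta\}.$$
   Context: $e(x):=\exp(2\pi i x)$; $\|x\|$ denotes the distance from $x$ to the nearest integer. The inner sums run over positive integers $n$. The implied constant is absolute. *)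

theory Defs
  imports "HOL-Analysis.Analysis"
begin

definition e :: "real \<Rightarrow> complex" where
  "e x = exp (2 * pi * \<i> * complex_of_real x)"

definition dist_nint :: "real \<Rightarrow> real" where
  "dist_nint x = \<bar>x - of_int (round x)\<bar>"

definition psum :: "(nat \<Rightarrow> complex) \<Rightarrow> real \<Rightarrow> int \<Rightarrow> real \<Rightarrow> complex" where
  "psum a lam m N = (\<Sum>n\<in>{n::nat. 1 \<le> n \<and> real_of_int m * real n \<le> N}. a n * e (lam * real n))"

text \<open>max over N \<le> X of |psum|^2; the sum only depends on floor N, and is 0 for N < 1,
  so the maximum is taken over integers 0 \<le> N \<le> X.\<close>
definition maxpsum :: "(nat \<Rightarrow> complex) \<Rightarrow> real \<Rightarrow> int \<Rightarrow> real \<Rightarrow> real" where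
  "maxpsum a lam m X = Max ((\<lambda>N::nat. (cmod (psum a lam m (real N)))^2) ` {N. real N \<le> X})"

text \<open>D_delta; taken to be 0 for the empty set.\<close>
definition Ddelta :: "(int \<times> int) set \<Rightarrow> (int \<times> int \<Rightarrow> real) \<Rightarrow> real \<Rightarrow> nat" where
  "Ddelta S lam \<delta> = Max (insert 0 ((\<lambda>p. card {q \<in> S. dist_nint (lam p - lam q) < \<delta>}) ` S))"

end

theory Submission
  imports Defs
begin

text \<open>Fix for each point \<open>p = (l, m)\<close> a cutoff \<open>N\<^sub>p \<le> X\<close> attaining the maximum. The inner sum is
  then \<open>\<Sum>\<^sub>n a\<^sub>n x\<^sub>p(n)\<close> over \<open>n \<le> K = \<lfloor>X/M\<rfloor>\<close>, with the truncated characters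
  \<open>x\<^sub>p(n) = e(\<lambda>\<^sub>p n)\<close> for \<open>n \<le> \<lfloor>N\<^sub>p/m\<rfloor>\<close> and \<open>0\<close> beyond. By duality (Cauchy--Schwarz and Schur's
  test) the left-hand side is at most \<open>B \<Sum>|a\<^sub>n|\<^sup>2\<close>, where \<open>B\<close> bounds the row sums of the Gram matrix
  \<open>\<Sum>\<^sub>n x\<^sub>p(n) x\<^sub>q(n)\<^sup>*\<close>. Its entries are geometric sums: at most \<open>K\<close> for the at most \<open>D\<^sub>\<delta>\<close> points
  \<open>q\<close> with \<open>\<parallel>\<lambda>\<^sub>p - \<lambda>\<^sub>q\<parallel> < \<delta>\<close>, and at most \<open>1/\<parallel>\<lambda>\<^sub>p - \<lambda>\<^sub>q\<parallel>\<close> otherwise. Sorting the remaining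
  \<open>\<lambda>\<^sub>q\<close> into bins of width \<open>\<delta>\<close>, each containing at most \<open>D\<^sub>\<delta>\<close> of them, bounds the far part by a
  harmonic sum, \<open>4 D\<^sub>\<delta> \<delta>\<^sup>-\<^sup>1 (1 + log T)\<close>.\<close>

lemma e_conv_cis: "e x = cis (2 * pi * x)"
  unfolding e_def cis_conv_exp by (simp add: mult_ac)

lemma e_add: "e (x + y) = e x * e y"
  by (simp add: e_conv_cis cis_mult distrib_left)

lemma cnj_e: "cnj (e x) = e (- x)"
  by (simp add: e_conv_cis cis_cnj)

lemma e_of_int [simp]: "e (of_int k) = 1"
  by (simp add: e_conv_cis)

lemma norm_e [simp]: "norm (e x) = 1"
  by (simp add: e_conv_cis)

lemma e_mult_of_nat: "e (x * real n) = e x ^ n"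
proof -
  have "e x ^ n = cis (real n * (2 * pi * x))"
    by (simp only: e_conv_cis Complex.DeMoivre)
  then show ?thesis
    by (simp add: e_conv_cis mult_ac)
qed

lemma dist_nint_le: "dist_nint x \<le> \<bar>x - of_int k\<bar>"
proof (cases "k = round x")
  case False
  then have "1 \<le> \<bar>real_of_int k - of_int (round x)\<bar>"
    by (metis of_int_1 of_int_abs of_int_diff of_int_le_iff zero_less_abs_iff
        int_one_le_iff_zero_less eq_iff_diff_eq_0)
  then show ?thesis
    using of_int_round_abs_le[of x] unfolding dist_nint_def by linarith
qed (simp add: dist_nint_def)

lemma dist_nint_le_half: "dist_nint x \<le> 1/2"
  unfolding dist_nint_def using of_int_round_abs_le[of x] by (simp add: abs_minus_commute)

lemma dist_nint_add_of_int: "dist_nint (x + of_int k) = dist_nint x"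
  using dist_nint_le[of "x + of_int k" "round x + k"] dist_nint_le[of x "round (x + of_int k) - k"]
  by (simp add: dist_nint_def algebra_simps)

lemma dist_nint_minus: "dist_nint (- x) = dist_nint x"
  using dist_nint_le[of "- x" "- round x"] dist_nint_le[of x "- round (- x)"]
  by (simp add: dist_nint_def abs_minus_commute)

lemma sin_pi_ge:
  assumes "0 \<le> d" "d \<le> 1/2"
  shows "d \<le> sin (pi * d)"
proof -
  have "\<bar>sin (pi * d) - (\<Sum>m<3. sin_coeff m * (pi * d) ^ m)\<bar> \<le> inverse (fact 3) * \<bar>pi * d\<bar> ^ 3"
    by (rule Maclaurin_sin_bound)
  moreover have "(\<Sum>m<3. sin_coeff m * (pi * d) ^ m) = pi * d"
    by (simp add: eval_nat_numeral sin_coeff_def)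
  ultimately have "\<bar>sin (pi * d) - pi * d\<bar> \<le> (pi * d) ^ 3 / 6"
    using assms by (simp add: fact_numeral divide_simps)
  then have taylor: "pi * d - (pi * d) ^ 3 / 6 \<le> sin (pi * d)"
    by linarith
  have "pi * d \<le> 4 * (1/2)"
    using pi_less_4 assms by (intro mult_mono) auto
  then have "(pi * d) ^ 2 \<le> 2 ^ 2"
    using assms by (intro power_mono) auto
  then have "(pi * d) * (pi * d) ^ 2 \<le> (pi * d) * 4"
    using assms by (intro mult_left_mono) auto
  moreover have "(pi * d) ^ 3 = (pi * d) * (pi * d) ^ 2"
    by (simp add: power3_eq_cube power2_eq_square)
  ultimately have "(pi * d) ^ 3 / 6 \<le> (pi * d) * (2/3)"
    by linarith
  moreover have "3 * d \<le> pi * d"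
    using pi_gt3 assms by (simp add: mult_right_mono)
  ultimately show ?thesis
    using taylor by linarith
qed

lemma norm_1_minus_e: "cmod (1 - e t) = 2 * \<bar>sin (pi * t)\<bar>"
proof -
  define z where "z = pi * t"
  have "e t = cis (2 * z)"
    by (simp add: e_conv_cis z_def mult_ac)
  then have "1 - e t = Complex (2 * sin z ^ 2) (- (2 * sin z * cos z))"
    by (simp add: complex_eq_iff cos_double_sin sin_double)
  moreover have "(2 * sin z ^ 2)\<^sup>2 + (- (2 * sin z * cos z))\<^sup>2 = (2 * sin z)\<^sup>2 * (sin z ^ 2 + cos z ^ 2)"
    by algebra
  ultimately have "cmod (1 - e t) = sqrt ((2 * sin z)\<^sup>2)"
    by (simp only: complex_norm sin_cos_squared_add mult_1_right)
  then show ?thesis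
    by (simp only: real_sqrt_abs abs_mult abs_numeral z_def)
qed

lemma norm_1_minus_e_ge: "2 * dist_nint t \<le> cmod (1 - e t)"
proof -
  define r where "r = t - of_int (round t)"
  have "e t = e r"
    using e_add[of r "of_int (round t)"] by (simp add: r_def)
  have r_half: "\<bar>r\<bar> \<le> 1/2" and dist_r: "dist_nint t = \<bar>r\<bar>"
    using dist_nint_le_half[of t] by (simp_all add: dist_nint_def r_def)
  have "\<bar>sin (pi * r)\<bar> = \<bar>sin (pi * \<bar>r\<bar>)\<bar>"
    by (cases "r \<ge> 0") simp_all
  also have "\<dots> = sin (pi * \<bar>r\<bar>)"
    using sin_ge_zero[of "pi * \<bar>r\<bar>"] r_half by simp
  finally have "\<bar>sin (pi * r)\<bar> = sin (pi * \<bar>r\<bar>)" .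
  then show ?thesis
    using norm_1_minus_e[of r] sin_pi_ge[of "\<bar>r\<bar>"] r_half \<open>e t = e r\<close> dist_r by simp
qed

lemma norm_sum_e_le:
  assumes "dist_nint \<theta> > 0"
  shows "cmod (\<Sum>n=1..k. e (\<theta> * real n)) \<le> 1 / dist_nint \<theta>"
proof (cases "k = 0")
  case False
  define w where "w = e \<theta>"
  have "(1 - w) * (\<Sum>n=1..k. w ^ n) = w ^ 1 - w ^ Suc k"
    by (rule sum_gp_multiplied) (use False in simp)
  then have "cmod (1 - w) * cmod (\<Sum>n=1..k. w ^ n) = cmod (w ^ 1 - w ^ Suc k)"
    by (simp only: norm_mult[symmetric])
  also have "\<dots> \<le> 2"
    using norm_triangle_ineq4[of w "w ^ Suc k"] by (simp add: w_def norm_power norm_mult)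
  finally have "2 * dist_nint \<theta> * cmod (\<Sum>n=1..k. w ^ n) \<le> 2"
    using norm_1_minus_e_ge[of \<theta>] by (smt (verit) mult_right_mono norm_ge_zero w_def)
  then show ?thesis
    using assms by (simp add: w_def e_mult_of_nat field_simps)
qed (use assms in simp)

lemma schur_test_symmetric:
  fixes c :: "'p \<Rightarrow> real" and g :: "'p \<Rightarrow> 'p \<Rightarrow> real"
  assumes "finite P" and sym: "\<And>p q. g p q = g q p" and nonneg: "\<And>p q. 0 \<le> g p q"
    and row: "\<And>p. p \<in> P \<Longrightarrow> (\<Sum>q\<in>P. g p q) \<le> B"
  shows "(\<Sum>p\<in>P. \<Sum>q\<in>P. c p * c q * g p q) \<le> B * (\<Sum>p\<in>P. (c p)\<^sup>2)"
proof -
  have "(\<Sum>p\<in>P. \<Sum>q\<in>P. c p * c q * g p q)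
      \<le> (\<Sum>p\<in>P. \<Sum>q\<in>P. ((c p)\<^sup>2 / 2 + (c q)\<^sup>2 / 2) * g p q)"
  proof (intro sum_mono mult_right_mono)
    fix p q
    show "c p * c q \<le> (c p)\<^sup>2 / 2 + (c q)\<^sup>2 / 2"
      using sum_squares_bound[of "c p" "c q"] by (simp add: power2_eq_square field_simps)
  qed (rule nonneg)
  also have "\<dots> = (\<Sum>p\<in>P. \<Sum>q\<in>P. (c p)\<^sup>2 / 2 * g p q) + (\<Sum>p\<in>P. \<Sum>q\<in>P. (c q)\<^sup>2 / 2 * g q p)"
    by (simp add: distrib_right sum.distrib sym)
  also have "\<dots> = 2 * (\<Sum>p\<in>P. \<Sum>q\<in>P. (c p)\<^sup>2 / 2 * g p q)"
    using sum.swap[of "\<lambda>p q. (c q)\<^sup>2 / 2 * g q p" P P] by simp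
  also have "\<dots> = (\<Sum>p\<in>P. (c p)\<^sup>2 * (\<Sum>q\<in>P. g p q))"
    by (simp add: sum_distrib_left)
  also have "\<dots> \<le> (\<Sum>p\<in>P. (c p)\<^sup>2 * B)"
    by (intro sum_mono mult_left_mono row) auto
  finally show ?thesis
    by (simp add: sum_distrib_left mult.commute)
qed

lemma dual_large_sieve:
  fixes x :: "'p \<Rightarrow> 'n \<Rightarrow> complex" and c :: "'p \<Rightarrow> complex"
  assumes "finite P" "finite A"
    and row: "\<And>p. p \<in> P \<Longrightarrow> (\<Sum>q\<in>P. cmod (\<Sum>n\<in>A. x p n * cnj (x q n))) \<le> B"
  shows "(\<Sum>n\<in>A. (cmod (\<Sum>p\<in>P. c p * x p n))\<^sup>2) \<le> B * (\<Sum>p\<in>P. (cmod (c p))\<^sup>2)"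
proof -
  define G where "G p q = (\<Sum>n\<in>A. x p n * cnj (x q n))" for p q
  define L where "L = (\<Sum>n\<in>A. (cmod (\<Sum>p\<in>P. c p * x p n))\<^sup>2)"
  have "0 \<le> L"
    by (simp add: L_def sum_nonneg)
  have "complex_of_real L
      = (\<Sum>n\<in>A. (\<Sum>p\<in>P. c p * x p n) * cnj (\<Sum>q\<in>P. c q * x q n))"
    unfolding L_def of_real_sum by (intro sum.cong refl) (rule complex_norm_square)
  also have "\<dots> = (\<Sum>n\<in>A. \<Sum>p\<in>P. \<Sum>q\<in>P. c p * cnj (c q) * (x p n * cnj (x q n)))"
    unfolding cnj_sum sum_product by (intro sum.cong refl) (simp only: complex_cnj_mult mult_ac)
  also have "\<dots> = (\<Sum>p\<in>P. \<Sum>q\<in>P. \<Sum>n\<in>A. c p * cnj (c q) * (x p n * cnj (x q n)))"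
    by (rule trans[OF sum.swap]) (intro sum.cong refl, rule sum.swap)
  also have "\<dots> = (\<Sum>p\<in>P. \<Sum>q\<in>P. c p * cnj (c q) * G p q)"
    by (simp add: G_def sum_distrib_left)
  finally have "L = cmod (\<Sum>p\<in>P. \<Sum>q\<in>P. c p * cnj (c q) * G p q)"
    using \<open>0 \<le> L\<close> by (metis abs_of_nonneg norm_of_real)
  also have "\<dots> \<le> (\<Sum>p\<in>P. \<Sum>q\<in>P. cmod (c p) * cmod (c q) * cmod (G p q))"
    by (rule order_trans[OF norm_sum sum_mono], rule order_trans[OF norm_sum]) (simp add: norm_mult)
  also have "\<dots> \<le> B * (\<Sum>p\<in>P. (cmod (c p))\<^sup>2)"
  proof (rule schur_test_symmetric)
    show "cmod (G p q) = cmod (G q p)" for p q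
    proof -
      have "cnj (G p q) = G q p"
        by (simp add: G_def cnj_sum mult.commute)
      then show ?thesis
        by (metis complex_mod_cnj)
    qed
  qed (use assms in \<open>simp_all add: G_def\<close>)
  finally show ?thesis
    unfolding L_def .
qed

lemma large_sieve_by_duality:
  fixes x :: "'p \<Rightarrow> 'n \<Rightarrow> complex" and a :: "'n \<Rightarrow> complex"
  assumes "finite P" "finite A" "0 \<le> B"
    and row: "\<And>p. p \<in> P \<Longrightarrow> (\<Sum>q\<in>P. cmod (\<Sum>n\<in>A. x p n * cnj (x q n))) \<le> B"
  shows "(\<Sum>p\<in>P. (cmod (\<Sum>n\<in>A. a n * x p n))\<^sup>2) \<le> B * (\<Sum>n\<in>A. (cmod (a n))\<^sup>2)"
proof -
  define S where "S p = (\<Sum>n\<in>A. a n * x p n)" for p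
  define W where "W = (\<Sum>p\<in>P. (cmod (S p))\<^sup>2)"
  define z where "z n = (\<Sum>p\<in>P. cnj (S p) * x p n)" for n
  define Q where "Q = (\<Sum>n\<in>A. (cmod (a n))\<^sup>2)"
  have "0 \<le> W" "0 \<le> Q"
    by (simp_all add: W_def Q_def sum_nonneg)
  have "complex_of_real W = (\<Sum>p\<in>P. cnj (S p) * S p)"
    unfolding W_def of_real_sum by (intro sum.cong refl) (metis complex_norm_square mult.commute)
  also have "\<dots> = (\<Sum>n\<in>A. a n * z n)"
    unfolding S_def z_def sum_distrib_left by (subst sum.swap) (simp add: mult_ac)
  finally have "W = cmod (\<Sum>n\<in>A. a n * z n)"
    using \<open>0 \<le> W\<close> by (metis abs_of_nonneg norm_of_real)
  then have "W \<le> (\<Sum>n\<in>A. cmod (a n) * cmod (z n))"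
    using norm_sum[of "\<lambda>n. a n * z n" A] by (simp add: norm_mult)
  then have "W\<^sup>2 \<le> (\<Sum>n\<in>A. cmod (a n) * cmod (z n))\<^sup>2"
    using \<open>0 \<le> W\<close> by (simp add: power_mono)
  also have "\<dots> \<le> Q * (\<Sum>n\<in>A. (cmod (z n))\<^sup>2)"
    unfolding Q_def by (rule Cauchy_Schwarz_ineq_sum)
  also have "\<dots> \<le> Q * (B * W)"
    using dual_large_sieve[OF assms(1,2) row, of "\<lambda>p. cnj (S p)"] \<open>0 \<le> Q\<close>
    by (simp add: z_def W_def mult_left_mono)
  finally have "W\<^sup>2 \<le> Q * (B * W)" .
  then have "W \<le> B * Q"
    using \<open>0 \<le> W\<close> \<open>0 \<le> B\<close> \<open>0 \<le> Q\<close>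
    by (cases "W = 0") (simp_all add: power2_eq_square mult_ac)
  then show ?thesis
    by (simp add: W_def S_def Q_def)
qed

lemma sum_inverse_le_harm:
  fixes J :: "nat set"
  assumes "finite J" "0 \<notin> J"
  shows "(\<Sum>j\<in>J. 1 / real j) \<le> harm (card J)"
  using assms
proof (induction "card J" arbitrary: J)
  case 0
  then show ?case by (simp add: harm_def)
next
  case (Suc n)
  define m where "m = Max J"
  have "J \<noteq> {}"
    using Suc by auto
  then have "m \<in> J"
    using Suc.prems(1) by (simp add: m_def)
  have "J \<subseteq> {1..m}"
  proof
    fix x
    assume "x \<in> J"
    have "x \<noteq> 0"
      using \<open>x \<in> J\<close> Suc.prems(2) by metis
    moreover have "x \<le> m"
      using \<open>x \<in> J\<close> Suc.prems(1) by (simp add: m_def)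
    ultimately show "x \<in> {1..m}"
      by simp
  qed
  then have "Suc n \<le> m"
    using card_mono[of "{1..m}" J] Suc.hyps(2) by simp
  have "(\<Sum>j\<in>J. 1 / real j) = 1 / real m + (\<Sum>j\<in>J - {m}. 1 / real j)"
    using sum.remove[OF Suc.prems(1) \<open>m \<in> J\<close>] by simp
  also have "\<dots> \<le> 1 / real (Suc n) + harm n"
  proof (rule add_mono)
    show "1 / real m \<le> 1 / real (Suc n)"
      using \<open>Suc n \<le> m\<close> by (simp add: frac_le)
    have "n = card (J - {m})"
      using Suc.hyps(2) Suc.prems(1) \<open>m \<in> J\<close> by simp
    with Suc.hyps(1)[OF this] Suc.prems show "(\<Sum>j\<in>J - {m}. 1 / real j) \<le> harm n"
      by simp
  qed
  finally show ?case
    using Suc.hyps(2)[symmetric] by (simp add: harm_Suc inverse_eq_divide)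
qed

lemma sum_inverse_abs_int_le_harm:
  fixes I :: "int set"
  assumes "finite I" "0 \<notin> I"
  shows "(\<Sum>j\<in>I. 1 / \<bar>real_of_int j\<bar>) \<le> 2 * harm (card I)"
proof -
  have half: "(\<Sum>j\<in>K. 1 / \<bar>real_of_int j\<bar>) \<le> harm (card I)" if "K \<subseteq> I" "inj_on abs K" for K
  proof -
    have inj: "inj_on (nat \<circ> abs) K"
      using that by (auto simp: inj_on_def)
    have "finite K"
      using \<open>K \<subseteq> I\<close> assms(1) by (rule finite_subset)
    have "(\<Sum>j\<in>K. 1 / \<bar>real_of_int j\<bar>) = (\<Sum>m\<in>(nat \<circ> abs) ` K. 1 / real m)"
      unfolding sum.reindex[OF inj] by simp
    also have "\<dots> \<le> harm (card ((nat \<circ> abs) ` K))"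
      using \<open>finite K\<close> that assms(2) by (intro sum_inverse_le_harm) auto
    also have "\<dots> \<le> harm (card I)"
      using card_mono[OF assms(1) \<open>K \<subseteq> I\<close>] card_image[OF inj] by (simp add: harm_mono)
    finally show ?thesis .
  qed
  have "I = {j\<in>I. 0 < j} \<union> {j\<in>I. j < 0}"
    using assms(2) less_linear[of 0] by blast
  then have "(\<Sum>j\<in>I. 1 / \<bar>real_of_int j\<bar>)
      = (\<Sum>j\<in>{j\<in>I. 0 < j}. 1 / \<bar>real_of_int j\<bar>) + (\<Sum>j\<in>{j\<in>I. j < 0}. 1 / \<bar>real_of_int j\<bar>)"
    using assms(1) by (metis (no_types, lifting) finite_Un sum.union_disjoint disjoint_iff mem_Collect_eq not_less_iff_gr_or_eq)
  also have "\<dots> \<le> harm (card I) + harm (card I)"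
    by (intro add_mono half) (auto simp: inj_on_def)
  finally show ?thesis
    by simp
qed

lemma sum_inverse_separated:
  fixes r :: "'q \<Rightarrow> real"
  assumes "finite F" "0 < \<delta>"
    and far: "\<And>q. q \<in> F \<Longrightarrow> \<delta> \<le> \<bar>r q\<bar>"
    and sparse: "\<And>q. q \<in> F \<Longrightarrow> real (card {q'\<in>F. \<bar>r q - r q'\<bar> < \<delta>}) \<le> D"
  shows "(\<Sum>q\<in>F. 1 / \<bar>r q\<bar>) \<le> 4 * D / \<delta> * harm (card F)"
proof (cases "F = {}")
  case False
  define i where "i q = \<lfloor>r q / \<delta>\<rfloor>" for q
  have bin: "0 \<le> r q - of_int (i q) * \<delta>" "r q - of_int (i q) * \<delta> < \<delta>" for q
    using \<open>0 < \<delta>\<close> floor_divide_lower[of \<delta> "r q"] floor_divide_upper[of \<delta> "r q"]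
    by (simp_all add: i_def algebra_simps)
  have i_nonzero: "i q \<noteq> 0" and inverse_le: "1 / \<bar>r q\<bar> \<le> 2 / \<delta> * (1 / \<bar>real_of_int (i q)\<bar>)"
    if "q \<in> F" for q
  proof -
    show "i q \<noteq> 0"
      using bin[of q] far[OF that] by auto
    have "\<bar>real_of_int (i q)\<bar> * \<delta> \<le> \<bar>r q\<bar> + \<delta>"
      using bin[of q] \<open>0 < \<delta>\<close> by (simp add: abs_le_iff abs_mult)
    then have "\<bar>real_of_int (i q)\<bar> * \<delta> \<le> 2 * \<bar>r q\<bar>"
      using far[OF that] by linarith
    then show "1 / \<bar>r q\<bar> \<le> 2 / \<delta> * (1 / \<bar>real_of_int (i q)\<bar>)"
      using \<open>i q \<noteq> 0\<close> far[OF that] \<open>0 < \<delta>\<close> by (simp add: field_simps)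
  qed
  have bin_card: "real (card {q\<in>F. i q = j}) \<le> D" if j: "j \<in> i ` F" for j
  proof -
    obtain q0 where "q0 \<in> F" "i q0 = j"
      using j by blast
    have "{q\<in>F. i q = j} \<subseteq> {q'\<in>F. \<bar>r q0 - r q'\<bar> < \<delta>}"
    proof safe
      fix q
      assume "q \<in> F" "j = i q"
      then have "of_int (i q) * \<delta> = of_int (i q0) * \<delta>"
        using \<open>i q0 = j\<close> by simp
      then show "\<bar>r q0 - r q\<bar> < \<delta>"
        using bin[of q] bin[of q0] by (simp add: abs_less_iff)
    qed
    then have "card {q\<in>F. i q = j} \<le> card {q'\<in>F. \<bar>r q0 - r q'\<bar> < \<delta>}"
      using \<open>finite F\<close> by (intro card_mono) auto
    then show ?thesis
      using sparse[OF \<open>q0 \<in> F\<close>] by linarith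
  qed
  have "0 \<le> D"
    using False sparse by (meson all_not_in_conv of_nat_0_le_iff order_trans)
  have "(\<Sum>q\<in>F. 1 / \<bar>r q\<bar>) \<le> (\<Sum>q\<in>F. 2 / \<delta> * (1 / \<bar>real_of_int (i q)\<bar>))"
    by (intro sum_mono inverse_le)
  also have "\<dots> = (\<Sum>j\<in>i ` F. real (card {q\<in>F. i q = j}) * (2 / \<delta> * (1 / \<bar>real_of_int j\<bar>)))"
    using \<open>finite F\<close> by (subst sum.group[symmetric, of F "i ` F" i]) auto
  also have "\<dots> \<le> (\<Sum>j\<in>i ` F. D * (2 / \<delta> * (1 / \<bar>real_of_int j\<bar>)))"
    using \<open>0 < \<delta>\<close> by (intro sum_mono mult_right_mono bin_card) auto
  also have "\<dots> = 2 * D / \<delta> * (\<Sum>j\<in>i ` F. 1 / \<bar>real_of_int j\<bar>)"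
    by (simp add: sum_distrib_left ac_simps)
  also have "\<dots> \<le> 2 * D / \<delta> * (2 * harm (card (i ` F)))"
    using \<open>finite F\<close> i_nonzero \<open>0 \<le> D\<close> \<open>0 < \<delta>\<close>
    by (intro mult_left_mono sum_inverse_abs_int_le_harm) auto
  also have "\<dots> \<le> 2 * D / \<delta> * (2 * harm (card F))"
    using \<open>finite F\<close> \<open>0 \<le> D\<close> \<open>0 < \<delta>\<close>
    by (intro mult_left_mono harm_mono card_image_le) auto
  finally show ?thesis
    by simp
qed (simp add: harm_def)

lemma sum_inverse_dist_nint_far_le:
  fixes lam :: "'p \<Rightarrow> real"
  assumes "finite S" "0 < \<delta>" "0 \<le> D"
    and near: "\<And>q. q \<in> S \<Longrightarrow> real (card {q'\<in>S. dist_nint (lam q - lam q') < \<delta>}) \<le> D"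
  shows "(\<Sum>q | q \<in> S \<and> \<delta> \<le> dist_nint (lam p - lam q). 1 / dist_nint (lam p - lam q))
           \<le> 4 * D / \<delta> * harm (card S)"
proof -
  define F where "F = {q\<in>S. \<delta> \<le> dist_nint (lam p - lam q)}"
  define r where "r q = (lam q - lam p) - of_int (round (lam q - lam p))" for q
  have dist_r: "dist_nint (lam p - lam q) = \<bar>r q\<bar>" for q
    using dist_nint_minus[of "lam q - lam p"] by (simp add: dist_nint_def r_def)
  have "finite F"
    using \<open>finite S\<close> by (simp add: F_def)
  have "(\<Sum>q\<in>F. 1 / \<bar>r q\<bar>) \<le> 4 * D / \<delta> * harm (card F)"
  proof (rule sum_inverse_separated[OF \<open>finite F\<close> \<open>0 < \<delta>\<close>])
    show "\<delta> \<le> \<bar>r q\<bar>" if "q \<in> F" for q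
      using that by (simp add: F_def dist_r)
    show "real (card {q'\<in>F. \<bar>r q - r q'\<bar> < \<delta>}) \<le> D" if "q \<in> F" for q
    proof -
      have dist_le: "dist_nint (lam q - lam q') \<le> \<bar>r q - r q'\<bar>" for q'
      proof -
        have "lam q - lam q' = (r q - r q') + of_int (round (lam q - lam p) - round (lam q' - lam p))"
          by (simp add: r_def)
        then have "dist_nint (lam q - lam q') = dist_nint (r q - r q')"
          by (simp only: dist_nint_add_of_int)
        then show ?thesis
          using dist_nint_le[of "r q - r q'" 0] by simp
      qed
      have "{q'\<in>F. \<bar>r q - r q'\<bar> < \<delta>} \<subseteq> {q'\<in>S. dist_nint (lam q - lam q') < \<delta>}"
        using dist_le by (auto simp: F_def intro: order_le_less_trans)
      then have "card {q'\<in>F. \<bar>r q - r q'\<bar> < \<delta>} \<le> card {q'\<in>S. dist_nint (lam q - lam q') < \<delta>}"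
        using \<open>finite S\<close> by (intro card_mono) auto
      then show ?thesis
        using near[of q] that by (simp add: F_def)
    qed
  qed
  also have "\<dots> \<le> 4 * D / \<delta> * harm (card S)"
    using \<open>finite S\<close> \<open>0 < \<delta>\<close> \<open>0 \<le> D\<close>
    by (intro mult_left_mono harm_mono card_mono) (auto simp: F_def)
  finally show ?thesis
    by (simp add: F_def dist_r)
qed

lemma sum_norm_exp_correlation_le:
  fixes lam :: "'p \<Rightarrow> real" and k :: "'p \<Rightarrow> nat"
  assumes "finite S" "0 < \<delta>" "0 \<le> D" "p \<in> S" "\<And>q. q \<in> S \<Longrightarrow> k q \<le> K"
    and near: "\<And>q. q \<in> S \<Longrightarrow> real (card {q'\<in>S. dist_nint (lam q - lam q') < \<delta>}) \<le> D"
  shows "(\<Sum>q\<in>S. cmod (\<Sum>n=1..min (k p) (k q). e ((lam p - lam q) * real n)))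
           \<le> D * K + 4 * D / \<delta> * harm (card S)"
proof -
  define g where "g q = cmod (\<Sum>n=1..min (k p) (k q). e ((lam p - lam q) * real n))" for q
  define N where "N = {q\<in>S. dist_nint (lam p - lam q) < \<delta>}"
  define F where "F = {q\<in>S. \<delta> \<le> dist_nint (lam p - lam q)}"
  have "(\<Sum>q\<in>S. g q) = (\<Sum>q\<in>N. g q) + (\<Sum>q\<in>F. g q)"
    using \<open>finite S\<close> by (subst sum.union_disjoint[symmetric]) (auto simp: N_def F_def intro: sum.cong)
  also have "(\<Sum>q\<in>N. g q) \<le> (\<Sum>q\<in>N. real K)"
  proof (rule sum_mono)
    fix q
    assume "q \<in> N"
    have "g q \<le> (\<Sum>n=1..min (k p) (k q). cmod (e ((lam p - lam q) * real n)))"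
      unfolding g_def by (rule norm_sum)
    also have "\<dots> \<le> real K"
      using assms(4,5) by (simp add: min.coboundedI1)
    finally show "g q \<le> real K" .
  qed
  also have "\<dots> \<le> D * K"
    using near[OF \<open>p \<in> S\<close>] by (simp add: N_def mult_right_mono)
  also have "(\<Sum>q\<in>F. g q) \<le> (\<Sum>q\<in>F. 1 / dist_nint (lam p - lam q))"
    unfolding g_def F_def by (intro sum_mono norm_sum_e_le) (use \<open>0 < \<delta>\<close> in auto)
  also have "\<dots> \<le> 4 * D / \<delta> * harm (card S)"
    unfolding F_def by (rule sum_inverse_dist_nint_far_le[OF assms(1-3) near])
  finally show ?thesis
    by (simp add: g_def)
qed

lemma large_sieve_truncated_exp:
  fixes lam :: "'p \<Rightarrow> real" and k :: "'p \<Rightarrow> nat" and a :: "nat \<Rightarrow> complex"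
  assumes "finite S" "0 < \<delta>" "0 \<le> D" "\<And>p. p \<in> S \<Longrightarrow> k p \<le> K"
    and near: "\<And>q. q \<in> S \<Longrightarrow> real (card {q'\<in>S. dist_nint (lam q - lam q') < \<delta>}) \<le> D"
  shows "(\<Sum>p\<in>S. (cmod (\<Sum>n=1..k p. a n * e (lam p * real n)))\<^sup>2)
           \<le> (D * K + 4 * D / \<delta> * harm (card S)) * (\<Sum>n=1..K. (cmod (a n))\<^sup>2)"
proof -
  define x where "x p n = (if n \<le> k p then e (lam p * real n) else 0)" for p n
  define B where "B = D * K + 4 * D / \<delta> * harm (card S)"
  have truncate: "(\<Sum>n=1..k p. a n * e (lam p * real n)) = (\<Sum>n=1..K. a n * x p n)" if "p \<in> S" for p
    using assms(4)[OF that] by (intro sum.mono_neutral_cong_left) (auto simp: x_def)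
  have correlation: "(\<Sum>n=1..K. x p n * cnj (x q n)) = (\<Sum>n=1..min (k p) (k q). e ((lam p - lam q) * real n))"
    if "p \<in> S" for p q
    using assms(4)[OF that]
    by (intro sum.mono_neutral_cong_right) (auto simp: x_def cnj_e e_add[symmetric] algebra_simps)
  have "(\<Sum>p\<in>S. (cmod (\<Sum>n=1..k p. a n * e (lam p * real n)))\<^sup>2)
      = (\<Sum>p\<in>S. (cmod (\<Sum>n=1..K. a n * x p n))\<^sup>2)"
    by (intro sum.cong refl) (simp only: truncate)
  also have "\<dots> \<le> B * (\<Sum>n=1..K. (cmod (a n))\<^sup>2)"
  proof (rule large_sieve_by_duality)
    show "0 \<le> B"
      using \<open>0 < \<delta>\<close> \<open>0 \<le> D\<close> by (simp add: B_def harm_nonneg)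
    show "(\<Sum>q\<in>S. cmod (\<Sum>n=1..K. x p n * cnj (x q n))) \<le> B" if "p \<in> S" for p
      unfolding correlation[OF that] B_def
      by (rule sum_norm_exp_correlation_le[OF assms(1-3) that assms(4) near])
  qed (use \<open>finite S\<close> in simp_all)
  finally show ?thesis
    unfolding B_def .
qed

lemma Collect_mult_le_eq_atLeastAtMost:
  fixes c N :: real
  assumes "0 < c"
  shows "{n::nat. 1 \<le> n \<and> c * real n \<le> N} = {1..nat \<lfloor>N / c\<rfloor>}"
proof -
  have "c * real n \<le> N \<longleftrightarrow> n \<le> nat \<lfloor>N / c\<rfloor>" if "1 \<le> n" for n
  proof -
    have "c * real n \<le> N \<longleftrightarrow> of_int (int n) \<le> N / c"
      using assms by (simp add: field_simps)
    also have "\<dots> \<longleftrightarrow> int n \<le> \<lfloor>N / c\<rfloor>"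
      by (rule le_floor_iff[symmetric])
    also have "\<dots> \<longleftrightarrow> n \<le> nat \<lfloor>N / c\<rfloor>"
      using that by linarith
    finally show ?thesis .
  qed
  then show ?thesis
    by auto
qed

lemma psum_eq_sum_atLeastAtMost:
  "0 < m \<Longrightarrow> psum a lam m N = (\<Sum>n=1..nat \<lfloor>N / real_of_int m\<rfloor>. a n * e (lam * real n))"
  unfolding psum_def by (subst Collect_mult_le_eq_atLeastAtMost) simp_all

lemma maxpsum_attained:
  assumes "0 \<le> X"
  shows "\<exists>N::nat. real N \<le> X \<and> maxpsum a lam m X = (cmod (psum a lam m (real N)))\<^sup>2"
proof -
  have "{N::nat. real N \<le> X} \<subseteq> {..nat \<lfloor>X\<rfloor>}"
    by (auto intro: le_nat_floor)
  then have "finite {N::nat. real N \<le> X}"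
    by (rule finite_subset) simp
  moreover have "0 \<in> {N::nat. real N \<le> X}"
    using assms by simp
  ultimately have "maxpsum a lam m X \<in> (\<lambda>N. (cmod (psum a lam m (real N)))\<^sup>2) ` {N. real N \<le> X}"
    unfolding maxpsum_def by (intro Max_in finite_imageI) blast+
  then show ?thesis
    by auto
qed

lemma card_near_le_Ddelta:
  "finite S \<Longrightarrow> q \<in> S \<Longrightarrow> card {q'\<in>S. dist_nint (lam q - lam q') < \<delta>} \<le> Ddelta S lam \<delta>"
  unfolding Ddelta_def by (intro Max_ge) auto

lemma harm_le_one_plus_ln: "0 < n \<Longrightarrow> harm n \<le> 1 + ln (real n)"
  using euler_mascheroni_sequence_decreasing[of 1 n] by (simp add: harm_def)

lemma ln_cube_bound:
  fixes X T :: real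
  assumes "1 \<le> X" "1 \<le> T"
  shows "5 + 4 * ln T \<le> 27 * (ln (2 * T * X))^3"
proof -
  define L where "L = ln (2 * T * X)"
  have "T \<le> T * X" "2 \<le> 2 * T * X"
    using assms mult_left_mono[of 1 X T] mult_mono[of 1 T 1 X] by simp_all
  then have "ln T \<le> L" "ln 2 \<le> L"
    using assms by (simp_all add: L_def)
  then have "2/3 \<le> L"
    using ln2_ge_two_thirds by linarith
  then have "4/9 \<le> L\<^sup>2"
    using power_mono[of "2/3" L 2] by (simp add: power_divide)
  have "5 + 4 * ln T \<le> 12 * L"
    using \<open>ln T \<le> L\<close> \<open>2/3 \<le> L\<close> by linarith
  also have "\<dots> = 27 * (4/9) * L"
    by simp
  also have "\<dots> \<le> 27 * L\<^sup>2 * L"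
    using \<open>4/9 \<le> L\<^sup>2\<close> \<open>2/3 \<le> L\<close> by (intro mult_right_mono) auto
  finally show ?thesis
    by (simp add: L_def power3_eq_cube power2_eq_square)
qed

lemma large_sieve_constant_le:
  fixes D \<delta> X T Y :: real
  assumes "0 \<le> D" "0 < \<delta>" "1 \<le> X" "0 < n" "real n \<le> T" "real K \<le> Y"
  shows "D * K + 4 * D / \<delta> * harm n \<le> 27 * D * (ln (2 * T * X))^3 * (Y + 1 / \<delta>)"
proof -
  define h :: real where "h = harm n"
  have "0 \<le> h" "0 \<le> Y" "0 \<le> 1 / \<delta>"
    using assms by (simp_all add: h_def harm_nonneg)
  have "D * K \<le> D * Y"
    using \<open>real K \<le> Y\<close> \<open>0 \<le> D\<close> by (rule mult_left_mono)
  moreover have "0 \<le> D * (1 / \<delta>)" "0 \<le> D * h * Y"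
    using \<open>0 \<le> D\<close> \<open>0 \<le> h\<close> \<open>0 \<le> Y\<close> \<open>0 \<le> 1 / \<delta>\<close> by simp_all
  moreover have "D * (1 + 4 * h) * (Y + 1 / \<delta>) = D * Y + D * (1 / \<delta>) + 4 * (D * h * Y) + 4 * D / \<delta> * h"
    by (simp add: algebra_simps)
  ultimately have "D * K + 4 * D / \<delta> * h \<le> D * (1 + 4 * h) * (Y + 1 / \<delta>)"
    by linarith
  also have "\<dots> \<le> D * (27 * (ln (2 * T * X))^3) * (Y + 1 / \<delta>)"
  proof -
    have "1 \<le> T"
      using \<open>0 < n\<close> \<open>real n \<le> T\<close> by linarith
    have "h \<le> 1 + ln (real n)"
      unfolding h_def using \<open>0 < n\<close> by (rule harm_le_one_plus_ln)
    also have "\<dots> \<le> 1 + ln T"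
      using \<open>0 < n\<close> \<open>real n \<le> T\<close> by simp
    finally have "1 + 4 * h \<le> 27 * (ln (2 * T * X))^3"
      using ln_cube_bound[OF \<open>1 \<le> X\<close> \<open>1 \<le> T\<close>] by linarith
    then show ?thesis
      using \<open>0 \<le> D\<close> \<open>0 \<le> Y\<close> \<open>0 \<le> 1 / \<delta>\<close> by (intro mult_right_mono mult_left_mono) simp_all
  qed
  finally show ?thesis
    by (simp add: h_def mult_ac)
qed

lemma sum_maxpsum_le:
  fixes X M \<delta> T :: real and S :: "(int \<times> int) set" and lam :: "int \<times> int \<Rightarrow> real"
  assumes "1 \<le> X" "1 \<le> M" "0 < \<delta>" "finite S" "real (card S) \<le> T"
    and m_ge: "\<forall>(l,m)\<in>S. M \<le> real_of_int m"
  shows "(\<Sum>(l,m)\<in>S. maxpsum a (lam (l,m)) m X)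
       \<le> 27 * real (Ddelta S lam \<delta>) * (ln (2 * T * X))^3 * (X / M + 1 / \<delta>)
           * (\<Sum>n\<in>{n::nat. 1 \<le> n \<and> real n \<le> X / M}. (cmod (a n))\<^sup>2)"
proof (cases "S = {}")
  case False
  define K where "K = nat \<lfloor>X / M\<rfloor>"
  have "\<forall>p\<in>S. \<exists>N::nat. real N \<le> X \<and> maxpsum a (lam p) (snd p) X = (cmod (psum a (lam p) (snd p) (real N)))\<^sup>2"
    using maxpsum_attained \<open>1 \<le> X\<close> by simp
  then obtain N where N: "\<And>p. p \<in> S \<Longrightarrow> real (N p) \<le> X"
      "\<And>p. p \<in> S \<Longrightarrow> maxpsum a (lam p) (snd p) X = (cmod (psum a (lam p) (snd p) (real (N p))))\<^sup>2"
    by (metis bchoice)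
  define k where "k p = nat \<lfloor>real (N p) / real_of_int (snd p)\<rfloor>" for p
  have k_le: "k p \<le> K" if "p \<in> S" for p
  proof -
    have "real (N p) / real_of_int (snd p) \<le> X / M"
      using N(1)[OF that] m_ge that \<open>1 \<le> M\<close> by (intro frac_le) auto
    then show ?thesis
      unfolding k_def K_def by (intro nat_mono floor_mono)
  qed
  have "(\<Sum>(l,m)\<in>S. maxpsum a (lam (l,m)) m X) = (\<Sum>p\<in>S. maxpsum a (lam p) (snd p) X)"
    by (simp add: case_prod_beta')
  also have "\<dots> = (\<Sum>p\<in>S. (cmod (\<Sum>n=1..k p. a n * e (lam p * real n)))\<^sup>2)"
  proof (rule sum.cong[OF refl])
    fix p
    assume "p \<in> S"
    then have "0 < snd p"
      using m_ge \<open>1 \<le> M\<close> by fastforce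
    then show "maxpsum a (lam p) (snd p) X = (cmod (\<Sum>n=1..k p. a n * e (lam p * real n)))\<^sup>2"
      using N(2)[OF \<open>p \<in> S\<close>] by (simp add: k_def psum_eq_sum_atLeastAtMost)
  qed
  also have "\<dots> \<le> (real (Ddelta S lam \<delta>) * K + 4 * real (Ddelta S lam \<delta>) / \<delta> * harm (card S))
      * (\<Sum>n=1..K. (cmod (a n))\<^sup>2)"
    by (rule large_sieve_truncated_exp[OF \<open>finite S\<close> \<open>0 < \<delta>\<close> _ k_le])
      (simp_all add: card_near_le_Ddelta[OF \<open>finite S\<close>])
  also have "\<dots> \<le> 27 * real (Ddelta S lam \<delta>) * (ln (2 * T * X))^3 * (X / M + 1 / \<delta>)
      * (\<Sum>n=1..K. (cmod (a n))\<^sup>2)"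
    using False assms(1-5) by (intro mult_right_mono large_sieve_constant_le sum_nonneg)
      (simp_all add: K_def card_gt_0_iff)
  finally show ?thesis
    using Collect_mult_le_eq_atLeastAtMost[of 1 "X / M"] by (simp add: K_def)
qed (simp add: Ddelta_def)

theorem lemma9:
  "\<exists>C>0. \<forall>(X::real) (M::real) (\<delta>::real) (T::real) (S::(int \<times> int) set)
          (lam::int \<times> int \<Rightarrow> real) (a::nat \<Rightarrow> complex).
     X \<ge> 1 \<longrightarrow> M \<ge> 1 \<longrightarrow> \<delta> > 0 \<longrightarrow> finite S \<longrightarrow> real (card S) \<le> T \<longrightarrow>
     (\<forall>(l,m)\<in>S. M \<le> real_of_int m \<and> real_of_int m < 2 * M) \<longrightarrow>
     (\<Sum>(l,m)\<in>S. maxpsum a (lam (l,m)) m X)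
       \<le> C * real (Ddelta S lam \<delta>) * (ln (2 * T * X))^3 * (X / M + 1 / \<delta>)
           * (\<Sum>n\<in>{n::nat. 1 \<le> n \<and> real n \<le> X / M}. (cmod (a n))^2)"
  by (intro exI[of _ 27] conjI allI impI sum_maxpsum_le) auto

end
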